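(* Let $X\sim\mathbb{P}$ on a sample space $\mathcal{X}$, let $G$ be a compact topological group acting on $\mathcal{X}$ with Haar probability measure $\mathbb{Q}$ (exact invariance not assumed). Let $\hat\theta:\mathcal{X}\to\mathbb{R}^p$ be an estimator of $\theta_0\in\mathbb{R}^p$ such that $(x,g)\mapsto\hat\theta(gx)$ is in $L^2(\mathbb{P}\times\mathbb{Q})$, let $\hat\theta_G(X)=\mathbb{E}_{g\sim\mathbb{Q}}\hat\theta(gX)$, and let $\|\hat\theta\|_\infty=\sup_x\|\hat\theta(x)\|_2$. Then $$\big|\mathrm{MSE}(\hat\theta_G)-\mathrm{MSE}(\hat\theta)+\mathbb{E}_X\operatorname{tr}(\mathrm{Cov}_g\hat\theta(gX))\big|\le\Delta,$$ where $$\Delta=\mathbb{E}_g\mathcal{W}_1(\hat\theta(gX),\hat\theta(X))\cdot\Big[\mathbb{E}_g\mathcal{W}_1(\hat\theta(gX),\hat\theta(X))+2\|\mathrm{Bias}(\hat\theta(X))\|_2+4\|\hat\theta\|_\infty\Big].$$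
   Context: $\mathrm{MSE}(T)=\mathbb{E}\|T(X)-\theta_0\|_2^2$ and $\mathrm{Bias}(T(X))=\mathbb{E}T(X)-\theta_0$. For fixed $g$, $\mathcal{W}_1(\hat\theta(gX),\hat\theta(X))$ is the Wasserstein-1 distance (with respect to the Euclidean metric) between the laws of $\hat\theta(gX)$ and $\hat\theta(X)$, $X\sim\mathbb{P}$; $\mathbb{E}_g$, $\mathrm{Cov}_g$ are over $g\sim\mathbb{Q}$. *)

theory Defs
  imports "HOL-Analysis.Analysis" "HOL-Probability.Probability"
begin

definition haar_prob :: "'g::{topological_group_add, t2_space} measure \<Rightarrow> bool" where
  "haar_prob Q \<longleftrightarrow> prob_space Q \<and> sets Q = sets borel \<and>
     (\<forall>g. distr Q Q (\<lambda>h. g + h) = Q) \<and>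
     (\<forall>A\<in>sets Q. emeasure Q A = (INF U\<in>{U. open U \<and> A \<subseteq> U}. emeasure Q U)) \<and>
     (\<forall>U. open U \<longrightarrow> emeasure Q U = (SUP K\<in>{K. compact K \<and> K \<subseteq> U}. emeasure Q K))"

definition group_action :: "('g::group_add \<Rightarrow> 'x \<Rightarrow> 'x) \<Rightarrow> 'x set \<Rightarrow> bool" where
  "group_action act S \<longleftrightarrow> (\<forall>g x. x \<in> S \<longrightarrow> act g x \<in> S) \<and>
     (\<forall>x\<in>S. act 0 x = x) \<and> (\<forall>g h x. x \<in> S \<longrightarrow> act (g + h) x = act g (act h x))"

definition couplings :: "'a measure \<Rightarrow> 'a measure \<Rightarrow> ('a \<times> 'a) measure set" where
  "couplings \<mu> \<nu> = {\<pi>. prob_space \<pi> \<and> sets \<pi> = sets (\<mu> \<Otimes>\<^sub>M \<nu>) \<and>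
       distr \<pi> \<mu> fst = \<mu> \<and> distr \<pi> \<nu> snd = \<nu>}"

definition wasserstein1 :: "'a::metric_space measure \<Rightarrow> 'a measure \<Rightarrow> ennreal" where
  "wasserstein1 \<mu> \<nu> = (INF \<pi>\<in>couplings \<mu> \<nu>. \<integral>\<^sup>+ z. ennreal (dist (fst z) (snd z)) \<partial>\<pi>)"

definition law :: "'w measure \<Rightarrow> ('w \<Rightarrow> 'a::topological_space) \<Rightarrow> 'a measure" where
  "law M Y = distr M borel Y"

definition cov_matrix :: "'w measure \<Rightarrow> ('w \<Rightarrow> real^'n) \<Rightarrow> real^'n^'n" where
  "cov_matrix M Y = (\<chi> i j. \<integral>w. (Y w $ i - (\<integral>w'. Y w' \<partial>M) $ i) *
                                   (Y w $ j - (\<integral>w'. Y w' \<partial>M) $ j) \<partial>M)"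

definition mat_trace :: "real^'n^'n \<Rightarrow> real" where
  "mat_trace A = (\<Sum>i\<in>UNIV. A $ i $ i)"

definition MSE :: "'x measure \<Rightarrow> ('x \<Rightarrow> real^'p) \<Rightarrow> real^'p \<Rightarrow> real" where
  "MSE M T \<theta>0 = (\<integral>x. (norm (T x - \<theta>0))^2 \<partial>M)"

definition Bias :: "'x measure \<Rightarrow> ('x \<Rightarrow> real^'p) \<Rightarrow> real^'p \<Rightarrow> real^'p" where
  "Bias M T \<theta>0 = (\<integral>x. T x \<partial>M) - \<theta>0"

definition sup_norm :: "'x set \<Rightarrow> ('x \<Rightarrow> real^'p) \<Rightarrow> ennreal" where
  "sup_norm S T = (SUP x\<in>S. ennreal (norm (T x)))"

end

theory Submission
  imports Defs
begin

(* Fubini and the bias-variance decomposition of g |-> theta(g x) under Q give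
   MSE(theta_G) + E_X tr Cov_g theta(gX) = E_g MSE(theta o g), so the left-hand side is
   E_g [MSE(theta o g) - MSE(theta)].  Each difference compares the integrals of
   v |-> |v - theta0|^2 under the laws of theta(gX) and theta(X).  On the ball of radius
   |theta|_inf this function is 2 (|theta|_inf + |theta0|)-Lipschitz, so through any coupling the
   difference is at most that constant times W1, and |theta0| <= |theta|_inf + |Bias|; this even
   yields the bound without the quadratic term.  For unbounded theta the claim is trivial unless
   E_g W1 = 0; then the Lipschitz truncations min(|v - theta0|, n)^2 have the same integrals for
   almost every g, and monotone convergence gives MSE(theta o g) = MSE(theta) almost surely. *)

section \<open>Bias-variance decomposition\<close>

lemma (in prob_space) integral_power2_diff_eq_bias_variance:
  fixes X :: "'a \<Rightarrow> real"
  assumes "X \<in> borel_measurable M" and "integrable M (\<lambda>x. (X x)\<^sup>2)"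
  shows "(\<integral>x. (X x - c)\<^sup>2 \<partial>M) = (expectation X - c)\<^sup>2 + variance X"
proof -
  have "integrable M X"
    using assms by (rule square_integrable_imp_integrable)
  then have "(\<integral>x. (X x - c)\<^sup>2 \<partial>M) = expectation (\<lambda>x. (X x)\<^sup>2) - 2 * c * expectation X + c\<^sup>2"
    using assms by (simp add: power2_diff prob_space)
  moreover have "variance X = expectation (\<lambda>x. (X x)\<^sup>2) - (expectation X)\<^sup>2"
    by (rule variance_eq) fact+
  ultimately show ?thesis
    by (simp add: power2_diff)
qed

lemma borel_measurable_vec_nth [measurable]: "(\<lambda>v::real^'n. v $ i) \<in> borel_measurable borel"
  by (intro borel_measurable_continuous_onI continuous_intros)

lemma (in prob_space) integral_norm_power2_diff_eq_bias_trace_cov: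
  fixes Y :: "'a \<Rightarrow> real^'n"
  assumes Y: "Y \<in> borel_measurable M" and Y2: "integrable M (\<lambda>x. (norm (Y x))\<^sup>2)"
  shows "(\<integral>x. (norm (Y x - c))\<^sup>2 \<partial>M) = (norm (expectation Y - c))\<^sup>2 + mat_trace (cov_matrix M Y)"
proof -
  have Yi: "(\<lambda>x. Y x $ i) \<in> borel_measurable M" for i
    using Y by measurable
  have Yi2: "integrable M (\<lambda>x. (Y x $ i)\<^sup>2)" for i
  proof (rule Bochner_Integration.integrable_bound[OF Y2])
    have "(v $ i)\<^sup>2 \<le> (norm v)\<^sup>2" for v :: "real^'n"
      using component_le_norm_cart[of v i] by (simp add: abs_le_square_iff[symmetric])
    then show "AE x in M. norm ((Y x $ i)\<^sup>2) \<le> norm ((norm (Y x))\<^sup>2)"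
      by simp
  qed (use Yi in measurable)
  have "integrable M Y"
    using square_integrable_imp_integrable[of "\<lambda>x. norm (Y x)"] Y Y2
    by (simp add: integrable_norm_iff)
  then have expectation_nth: "expectation Y $ i = expectation (\<lambda>x. Y x $ i)" for i
    using integral_bounded_linear[OF bounded_linear_vec_nth[of i], of M Y] by simp
  have square_nth: "(norm v)\<^sup>2 = (\<Sum>i\<in>UNIV. (v $ i)\<^sup>2)" for v :: "real^'n"
    unfolding norm_vec_def L2_set_def by (simp add: sum_nonneg)
  have "(\<integral>x. (norm (Y x - c))\<^sup>2 \<partial>M) = (\<Sum>i\<in>UNIV. \<integral>x. (Y x $ i - c $ i)\<^sup>2 \<partial>M)"
  proof -
    have "integrable M (\<lambda>x. (Y x $ i - c $ i)\<^sup>2)" for i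
    proof -
      have "integrable M (\<lambda>x. (Y x $ i)\<^sup>2 + (c $ i)\<^sup>2 - 2 * (Y x $ i) * c $ i)"
        using square_integrable_imp_integrable[OF Yi Yi2] Yi2
        by (intro Bochner_Integration.integrable_add Bochner_Integration.integrable_diff
            Bochner_Integration.integrable_mult_left Bochner_Integration.integrable_mult_right
            integrable_const)
      then show ?thesis
        by (simp add: power2_diff)
    qed
    then show ?thesis
      unfolding square_nth vector_minus_component by (rule Bochner_Integration.integral_sum)
  qed
  also have "\<dots> = (\<Sum>i\<in>UNIV. (expectation (\<lambda>x. Y x $ i) - c $ i)\<^sup>2 + variance (\<lambda>x. Y x $ i))"
    by (intro sum.cong refl integral_power2_diff_eq_bias_variance[OF Yi Yi2])
  also have "\<dots> = (norm (expectation Y - c))\<^sup>2 + mat_trace (cov_matrix M Y)"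
    unfolding square_nth mat_trace_def cov_matrix_def
    by (simp add: expectation_nth sum.distrib power2_eq_square)
  finally show ?thesis .
qed

lemma mat_trace_cov_matrix_nonneg: "0 \<le> mat_trace (cov_matrix M Y)"
  unfolding mat_trace_def cov_matrix_def by (auto intro!: sum_nonneg integral_nonneg_AE)

lemma (in finite_measure) integrable_norm_power2_diff:
  fixes f :: "'a \<Rightarrow> 'b::{real_normed_vector, second_countable_topology}"
  assumes "f \<in> borel_measurable M" and "integrable M (\<lambda>x. (norm (f x))\<^sup>2)"
  shows "integrable M (\<lambda>x. (norm (f x - c))\<^sup>2)"
proof (rule Bochner_Integration.integrable_bound)
  show "integrable M (\<lambda>x. 2 * (norm (f x))\<^sup>2 + 2 * (norm c)\<^sup>2)"
    using assms(2) by simp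
  have "(norm (v - c))\<^sup>2 \<le> 2 * (norm v)\<^sup>2 + 2 * (norm c)\<^sup>2" for v
    using norm_triangle_ineq4[of v c] zero_le_power2[of "norm v - norm c"]
    by (smt (verit, best) norm_ge_zero power2_diff power2_sum power_mono)
  then show "AE x in M. norm ((norm (f x - c))\<^sup>2) \<le> norm (2 * (norm (f x))\<^sup>2 + 2 * (norm c)\<^sup>2)"
    by (intro AE_I2) simp
qed (use assms(1) in measurable)

lemma MSE_average_add_expected_trace_cov:
  fixes F :: "'x \<Rightarrow> 'g \<Rightarrow> real^'p"
  assumes "prob_space M" and "prob_space Q"
    and F [measurable]: "(\<lambda>(x, g). F x g) \<in> borel_measurable (M \<Otimes>\<^sub>M Q)"
    and F2: "integrable (M \<Otimes>\<^sub>M Q) (\<lambda>(x, g). (norm (F x g))\<^sup>2)"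
  shows "MSE M (\<lambda>x. \<integral>g. F x g \<partial>Q) t + (\<integral>x. mat_trace (cov_matrix Q (F x)) \<partial>M)
    = (\<integral>g. MSE M (\<lambda>x. F x g) t \<partial>Q)"
proof -
  interpret pair_prob_space M Q
    using assms by (simp add: pair_prob_space_def pair_sigma_finite_def prob_space_imp_sigma_finite)
  define E where "E x g = (norm (F x g - t))\<^sup>2" for x g
  have E_integrable: "integrable (M \<Otimes>\<^sub>M Q) (\<lambda>(x, g). E x g)"
    using P.integrable_norm_power2_diff[OF F, of t] F2 by (simp add: E_def split_beta')
  have trace_measurable: "(\<lambda>x. mat_trace (cov_matrix Q (F x))) \<in> borel_measurable M"
    unfolding mat_trace_def cov_matrix_def vec_lambda_beta by measurable
  have bias_variance: "AE x in M. (\<integral>g. E x g \<partial>Q)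
      = (norm ((\<integral>g. F x g \<partial>Q) - t))\<^sup>2 + mat_trace (cov_matrix Q (F x))"
    using AE_integrable_fst[OF F2]
  proof (rule AE_mp[OF _ AE_I2], intro impI)
    fix x assume "x \<in> space M" and "integrable Q (\<lambda>g. (norm (F x g))\<^sup>2)"
    moreover have "F x \<in> borel_measurable Q"
      using measurable_Pair2[OF F \<open>x \<in> space M\<close>] by simp
    ultimately show "(\<integral>g. E x g \<partial>Q) = (norm ((\<integral>g. F x g \<partial>Q) - t))\<^sup>2 + mat_trace (cov_matrix Q (F x))"
      unfolding E_def by (intro M2.integral_norm_power2_diff_eq_bias_trace_cov)
  qed
  have "MSE M (\<lambda>x. \<integral>g. F x g \<partial>Q) t + (\<integral>x. mat_trace (cov_matrix Q (F x)) \<partial>M)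
      = (\<integral>x. (\<integral>g. E x g \<partial>Q) \<partial>M)"
  proof -
    have "0 \<le> mat_trace (cov_matrix Q (F x))" for x
      by (rule mat_trace_cov_matrix_nonneg)
    then have "integrable M (\<lambda>x. (norm ((\<integral>g. F x g \<partial>Q) - t))\<^sup>2)"
      "integrable M (\<lambda>x. mat_trace (cov_matrix Q (F x)))"
      using bias_variance trace_measurable
      by (auto intro!: Bochner_Integration.integrable_bound[OF integrable_fst[OF E_integrable]]
          elim!: AE_mp)
    then have "MSE M (\<lambda>x. \<integral>g. F x g \<partial>Q) t + (\<integral>x. mat_trace (cov_matrix Q (F x)) \<partial>M)
        = (\<integral>x. (norm ((\<integral>g. F x g \<partial>Q) - t))\<^sup>2 + mat_trace (cov_matrix Q (F x)) \<partial>M)"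
      unfolding MSE_def by (rule Bochner_Integration.integral_add[symmetric])
    also have "\<dots> = (\<integral>x. (\<integral>g. E x g \<partial>Q) \<partial>M)"
      using bias_variance trace_measurable
      by (intro integral_cong_AE) (auto simp: E_def elim: AE_mp)
    finally show ?thesis .
  qed
  also have "\<dots> = (\<integral>g. MSE M (\<lambda>x. F x g) t \<partial>Q)"
    unfolding MSE_def E_def using Fubini_integral[OF E_integrable] by (simp add: E_def)
  finally show ?thesis .
qed

section \<open>Wasserstein-1 bounds for Lipschitz test functions\<close>

lemma pair_measure_in_couplings:
  assumes "prob_space \<mu>" and "prob_space \<nu>"
  shows "\<mu> \<Otimes>\<^sub>M \<nu> \<in> couplings \<mu> \<nu>"
proof -
  interpret pair_prob_space \<mu> \<nu>
    using assms by (simp add: pair_prob_space_def pair_sigma_finite_def prob_space_imp_sigma_finite)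
  have "distr (\<mu> \<Otimes>\<^sub>M \<nu>) \<nu> snd = \<nu>"
    by (subst distr_pair_swap) (simp add: distr_distr comp_def case_prod_beta' M1.distr_pair_fst)
  then show ?thesis
    unfolding couplings_def using M2.distr_pair_fst by (simp add: P.prob_space_axioms)
qed

lemma integral_diff_eq_integral_coupling:
  fixes f :: "'a \<Rightarrow> real"
  assumes "\<pi> \<in> couplings \<mu> \<nu>" and integrable: "integrable \<mu> f" "integrable \<nu> f"
  shows "integrable \<pi> (\<lambda>z. f (fst z) - f (snd z))"
    and "(\<integral>x. f x \<partial>\<mu>) - (\<integral>x. f x \<partial>\<nu>) = (\<integral>z. f (fst z) - f (snd z) \<partial>\<pi>)"
proof -
  from assms(1) have sets_\<pi>: "sets \<pi> = sets (\<mu> \<Otimes>\<^sub>M \<nu>)"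
    and marginals: "distr \<pi> \<mu> fst = \<mu>" "distr \<pi> \<nu> snd = \<nu>"
    unfolding couplings_def by auto
  have fst: "fst \<in> measurable \<pi> \<mu>" and snd: "snd \<in> measurable \<pi> \<nu>"
    using measurable_cong_sets[OF sets_\<pi> refl] by auto
  have f_\<mu>: "f \<in> borel_measurable \<mu>" and f_\<nu>: "f \<in> borel_measurable \<nu>"
    using integrable by auto
  have "integrable \<pi> (\<lambda>z. f (fst z))" "integrable \<pi> (\<lambda>z. f (snd z))"
    using integrable integrable_distr_eq[OF fst f_\<mu>] integrable_distr_eq[OF snd f_\<nu>] marginals
    by simp_all
  then show "integrable \<pi> (\<lambda>z. f (fst z) - f (snd z))"
    and "(\<integral>x. f x \<partial>\<mu>) - (\<integral>x. f x \<partial>\<nu>) = (\<integral>z. f (fst z) - f (snd z) \<partial>\<pi>)"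
    using integral_distr[OF fst f_\<mu>] integral_distr[OF snd f_\<nu>] marginals by simp_all
qed

lemma abs_integral_diff_le_coupling:
  fixes f :: "'a::{metric_space, second_countable_topology} \<Rightarrow> real"
  assumes \<pi>: "\<pi> \<in> couplings \<mu> \<nu>" and sets: "sets \<mu> = sets borel" "sets \<nu> = sets borel"
    and integrable: "integrable \<mu> f" "integrable \<nu> f"
    and K: "K \<in> sets borel" "AE x in \<mu>. x \<in> K" "AE x in \<nu>. x \<in> K"
    and f: "L-lipschitz_on K f"
  shows "ennreal \<bar>(\<integral>x. f x \<partial>\<mu>) - (\<integral>x. f x \<partial>\<nu>)\<bar>
    \<le> ennreal L * (\<integral>\<^sup>+z. ennreal (dist (fst z) (snd z)) \<partial>\<pi>)"
proof -
  from \<pi> have sets_\<pi>: "sets \<pi> = sets (\<mu> \<Otimes>\<^sub>M \<nu>)"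
    and marginals: "distr \<pi> \<mu> fst = \<mu>" "distr \<pi> \<nu> snd = \<nu>"
    unfolding couplings_def by auto
  have fst: "fst \<in> measurable \<pi> \<mu>" and snd: "snd \<in> measurable \<pi> \<nu>"
    using measurable_cong_sets[OF sets_\<pi> refl] by auto
  have "AE z in \<pi>. fst z \<in> K \<and> snd z \<in> K"
  proof -
    have "{x \<in> space \<mu>. x \<in> K} \<in> sets \<mu>" "{x \<in> space \<nu>. x \<in> K} \<in> sets \<nu>"
      using K(1) sets by (auto simp: Int_def[symmetric] Int_commute)
    then have "AE z in \<pi>. fst z \<in> K" "AE z in \<pi>. snd z \<in> K"
      using K(2,3) AE_distr_iff[OF fst, of "\<lambda>x. x \<in> K"] AE_distr_iff[OF snd, of "\<lambda>x. x \<in> K"]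
        marginals by metis+
    then show ?thesis by eventually_elim simp
  qed
  have "ennreal \<bar>(\<integral>x. f x \<partial>\<mu>) - (\<integral>x. f x \<partial>\<nu>)\<bar> \<le> (\<integral>\<^sup>+z. ennreal \<bar>f (fst z) - f (snd z)\<bar> \<partial>\<pi>)"
    using integral_diff_eq_integral_coupling[OF \<pi> integrable]
    by (simp add: nn_integral_eq_integral integral_abs_bound ennreal_leI)
  also have "\<dots> \<le> (\<integral>\<^sup>+z. ennreal L * ennreal (dist (fst z) (snd z)) \<partial>\<pi>)"
    using \<open>AE z in \<pi>. fst z \<in> K \<and> snd z \<in> K\<close>
  proof (rule nn_integral_mono_AE[OF AE_mp, OF _ AE_I2], intro impI)
    fix z assume "fst z \<in> K \<and> snd z \<in> K"
    then show "ennreal \<bar>f (fst z) - f (snd z)\<bar> \<le> ennreal L * ennreal (dist (fst z) (snd z))"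
      using lipschitz_onD[OF f] lipschitz_on_nonneg[OF f]
      by (simp add: ennreal_mult[symmetric] dist_real_def ennreal_leI)
  qed
  also have "\<dots> = ennreal L * (\<integral>\<^sup>+z. ennreal (dist (fst z) (snd z)) \<partial>\<pi>)"
  proof (intro nn_integral_cmult measurable_compose[OF _ measurable_ennreal] borel_measurable_dist)
    show "fst \<in> borel_measurable \<pi>" "snd \<in> borel_measurable \<pi>"
      using fst snd measurable_cong_sets[OF refl sets(1)] measurable_cong_sets[OF refl sets(2)] by auto
  qed
  finally show ?thesis .
qed

lemma abs_integral_diff_le_wasserstein1:
  fixes f :: "'a::{metric_space, second_countable_topology} \<Rightarrow> real"
  assumes "prob_space \<mu>" "prob_space \<nu>" "sets \<mu> = sets borel" "sets \<nu> = sets borel"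
    and "integrable \<mu> f" "integrable \<nu> f"
    and "K \<in> sets borel" "AE x in \<mu>. x \<in> K" "AE x in \<nu>. x \<in> K"
    and "L-lipschitz_on K f"
  shows "ennreal \<bar>(\<integral>x. f x \<partial>\<mu>) - (\<integral>x. f x \<partial>\<nu>)\<bar> \<le> ennreal L * wasserstein1 \<mu> \<nu>"
proof -
  define d where "d = \<bar>(\<integral>x. f x \<partial>\<mu>) - (\<integral>x. f x \<partial>\<nu>)\<bar>"
  have coupling_bound: "ennreal d \<le> ennreal L * (\<integral>\<^sup>+z. ennreal (dist (fst z) (snd z)) \<partial>\<pi>)"
    if "\<pi> \<in> couplings \<mu> \<nu>" for \<pi>
    unfolding d_def using that assms(3-) by (rule abs_integral_diff_le_coupling)
  show ?thesis
  proof (cases "L = 0")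
    case True
    then show ?thesis
      using coupling_bound[OF pair_measure_in_couplings[OF assms(1,2)]] by (simp add: d_def)
  next
    case False
    with lipschitz_on_nonneg[OF assms(10)] have "L > 0" by simp
    have "ennreal (d / L) \<le> wasserstein1 \<mu> \<nu>"
      unfolding wasserstein1_def
    proof (rule INF_greatest)
      fix \<pi> assume "\<pi> \<in> couplings \<mu> \<nu>"
      with coupling_bound have "ennreal L * ennreal (d / L)
          \<le> ennreal L * (\<integral>\<^sup>+z. ennreal (dist (fst z) (snd z)) \<partial>\<pi>)"
        using \<open>L > 0\<close> by (simp add: ennreal_mult[symmetric] d_def)
      then show "ennreal (d / L) \<le> (\<integral>\<^sup>+z. ennreal (dist (fst z) (snd z)) \<partial>\<pi>)"
        using \<open>L > 0\<close> by (simp add: ennreal_mult_le_mult_iff)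
    qed
    then have "ennreal L * ennreal (d / L) \<le> ennreal L * wasserstein1 \<mu> \<nu>"
      by (rule mult_left_mono) simp
    then show ?thesis
      using \<open>L > 0\<close> by (simp add: ennreal_mult[symmetric] d_def)
  qed
qed

lemma abs_integral_diff_le_wasserstein1_law:
  fixes X Y :: "'w \<Rightarrow> 'a::{metric_space, second_countable_topology}" and f :: "'a \<Rightarrow> real"
  assumes "prob_space M" and [measurable]: "X \<in> borel_measurable M" "Y \<in> borel_measurable M"
    and [measurable]: "f \<in> borel_measurable borel"
    and "integrable M (\<lambda>w. f (X w))" "integrable M (\<lambda>w. f (Y w))"
    and [measurable]: "K \<in> sets borel"
    and "\<And>w. w \<in> space M \<Longrightarrow> X w \<in> K" "\<And>w. w \<in> space M \<Longrightarrow> Y w \<in> K"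
    and "L-lipschitz_on K f"
  shows "ennreal \<bar>(\<integral>w. f (X w) \<partial>M) - (\<integral>w. f (Y w) \<partial>M)\<bar>
    \<le> ennreal L * wasserstein1 (law M X) (law M Y)"
proof -
  have "ennreal \<bar>(\<integral>y. f y \<partial>law M X) - (\<integral>y. f y \<partial>law M Y)\<bar>
      \<le> ennreal L * wasserstein1 (law M X) (law M Y)"
    using assms unfolding law_def
    by (intro abs_integral_diff_le_wasserstein1 prob_space.prob_space_distr)
      (auto simp: integrable_distr_eq AE_distr_iff intro: AE_I2)
  then show ?thesis
    unfolding law_def by (simp add: integral_distr)
qed

lemma lipschitz_on_power2:
  assumes "0 \<le> R"
  shows "(2 * R)-lipschitz_on {-R..R} (\<lambda>s::real. s\<^sup>2)"
proof (rule lipschitz_onI)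
  fix s u :: real assume "s \<in> {-R..R}" "u \<in> {-R..R}"
  then have "\<bar>s + u\<bar> \<le> 2 * R" by auto
  then have "\<bar>s - u\<bar> * \<bar>s + u\<bar> \<le> \<bar>s - u\<bar> * (2 * R)"
    by (intro mult_left_mono) auto
  then show "dist (s\<^sup>2) (u\<^sup>2) \<le> 2 * R * dist s u"
    by (simp add: dist_real_def power2_eq_square abs_mult[symmetric] algebra_simps)
qed (use assms in simp)

lemma lipschitz_on_norm_diff: "1-lipschitz_on U (\<lambda>v. norm (v - t))"
proof (rule lipschitz_onI)
  show "dist (norm (x - t)) (norm (y - t)) \<le> 1 * dist x y" for x y
    using norm_triangle_ineq3[of "x - t" "y - t"] by (simp add: dist_norm)
qed simp

lemma lipschitz_on_min_const: "1-lipschitz_on U (\<lambda>s::real. min s c)"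
  by (intro lipschitz_onI) (auto simp: dist_real_def min_def)

lemma abs_integral_power2_diff_le_wasserstein1_law:
  fixes X Y :: "'w \<Rightarrow> 'a::{metric_space, second_countable_topology}" and u :: "'a \<Rightarrow> real"
  assumes M: "prob_space M" and [measurable]: "X \<in> borel_measurable M" "Y \<in> borel_measurable M"
    and [measurable]: "u \<in> borel_measurable borel" "K \<in> sets borel"
    and K: "\<And>w. w \<in> space M \<Longrightarrow> X w \<in> K" "\<And>w. w \<in> space M \<Longrightarrow> Y w \<in> K"
    and u: "1-lipschitz_on K u" "\<And>v. v \<in> K \<Longrightarrow> \<bar>u v\<bar> \<le> R"
  shows "ennreal \<bar>(\<integral>w. (u (X w))\<^sup>2 \<partial>M) - (\<integral>w. (u (Y w))\<^sup>2 \<partial>M)\<bar>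
    \<le> ennreal (2 * R) * wasserstein1 (law M X) (law M Y)"
proof (rule abs_integral_diff_le_wasserstein1_law[OF M])
  interpret prob_space M by (rule M)
  obtain w where "w \<in> space M" using not_empty by blast
  then have "0 \<le> R" using u(2)[OF K(1)] by fastforce
  have "(2 * R * 1)-lipschitz_on K (\<lambda>v. (u v)\<^sup>2)"
  proof (rule lipschitz_on_compose2[OF u(1)])
    show "(2 * R)-lipschitz_on (u ` K) power2"
      using u(2) by (intro lipschitz_on_subset[OF lipschitz_on_power2[OF \<open>0 \<le> R\<close>]]) force
  qed
  then show "(2 * R)-lipschitz_on K (\<lambda>v. (u v)\<^sup>2)" by simp
  have "(u v)\<^sup>2 \<le> R\<^sup>2" if "v \<in> K" for v
    using u(2)[OF that] by (simp add: abs_le_square_iff[symmetric] \<open>0 \<le> R\<close>)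
  then show "integrable M (\<lambda>w. (u (X w))\<^sup>2)" "integrable M (\<lambda>w. (u (Y w))\<^sup>2)"
    using K by (auto intro!: integrable_const_bound[where B = "R\<^sup>2"] AE_I2)
qed (use K in auto)

lemma MSE_diff_le_wasserstein1:
  fixes X Y :: "'w \<Rightarrow> real^'p"
  assumes "prob_space M" "X \<in> borel_measurable M" "Y \<in> borel_measurable M"
    and "\<And>w. w \<in> space M \<Longrightarrow> norm (X w) \<le> b" "\<And>w. w \<in> space M \<Longrightarrow> norm (Y w) \<le> b"
  shows "ennreal \<bar>MSE M X t - MSE M Y t\<bar>
    \<le> ennreal (2 * (b + norm t)) * wasserstein1 (law M X) (law M Y)"
  unfolding MSE_def
proof (rule abs_integral_power2_diff_le_wasserstein1_law[where K = "cball 0 b"])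
  show "1-lipschitz_on (cball 0 b) (\<lambda>v. norm (v - t))"
    by (rule lipschitz_on_norm_diff)
  show "\<bar>norm (v - t)\<bar> \<le> b + norm t" if "v \<in> cball 0 b" for v
    using that norm_triangle_ineq4[of v t] by simp
qed (use assms in auto)

lemma truncated_second_moment_diff_le_wasserstein1:
  fixes X Y :: "'w \<Rightarrow> 'a::{real_normed_vector, second_countable_topology}" and n :: real
  assumes "prob_space M" "X \<in> borel_measurable M" "Y \<in> borel_measurable M" and "0 \<le> n"
  shows "ennreal \<bar>(\<integral>w. (min (norm (X w - t)) n)\<^sup>2 \<partial>M) - (\<integral>w. (min (norm (Y w - t)) n)\<^sup>2 \<partial>M)\<bar>
    \<le> ennreal (2 * n) * wasserstein1 (law M X) (law M Y)"
proof (rule abs_integral_power2_diff_le_wasserstein1_law[where K = UNIV])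
  have "(1 * 1)-lipschitz_on UNIV (\<lambda>v. min (norm (v - t)) n)"
    by (intro lipschitz_on_compose2[OF lipschitz_on_norm_diff lipschitz_on_min_const])
  then show "1-lipschitz_on UNIV (\<lambda>v. min (norm (v - t)) n)" by simp
qed (use assms in auto)

lemma (in prob_space) integral_nonneg_le_const:
  fixes f :: "'a \<Rightarrow> real"
  assumes "f \<in> borel_measurable M" and bounds: "\<And>x. x \<in> space M \<Longrightarrow> 0 \<le> f x \<and> f x \<le> B"
  shows "0 \<le> (\<integral>x. f x \<partial>M) \<and> (\<integral>x. f x \<partial>M) \<le> B"
proof
  show "0 \<le> (\<integral>x. f x \<partial>M)"
    using bounds by (intro integral_nonneg_AE AE_I2) blast
  have "integrable M f"
    using assms by (intro integrable_const_bound[where B = B] AE_I2) auto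
  then show "(\<integral>x. f x \<partial>M) \<le> B"
    using bounds by (intro integral_le_const AE_I2) blast+
qed

lemma integral_abs_le_cmult_nn_integral:
  fixes f :: "'a \<Rightarrow> real" and W :: "'a \<Rightarrow> ennreal"
  assumes f: "integrable Q f" and "0 \<le> c" and bound: "\<And>g. g \<in> space Q \<Longrightarrow> ennreal \<bar>f g\<bar> \<le> ennreal c * W g"
  shows "ennreal (\<integral>g. \<bar>f g\<bar> \<partial>Q) \<le> ennreal c * (\<integral>\<^sup>+g. W g \<partial>Q)"
proof (cases "c = 0")
  case True
  with bound have "(\<integral>g. \<bar>f g\<bar> \<partial>Q) = 0"
    by (intro integral_eq_zero_AE AE_I2) simp
  then show ?thesis by simp
next
  case False
  with \<open>0 \<le> c\<close> have "0 < c" by simp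
  \<comment> \<open>\<open>W\<close> need not be measurable, so \<open>c\<close> is moved out of the integral on the side of \<open>f\<close>.\<close>
  have "ennreal (\<integral>g. \<bar>f g\<bar> \<partial>Q) = (\<integral>\<^sup>+g. ennreal c * ennreal (\<bar>f g\<bar> / c) \<partial>Q)"
    using f \<open>0 < c\<close> by (simp add: nn_integral_eq_integral ennreal_mult[symmetric])
  also have "\<dots> = ennreal c * (\<integral>\<^sup>+g. ennreal (\<bar>f g\<bar> / c) \<partial>Q)"
    using f by (intro nn_integral_cmult) simp
  also have "\<dots> \<le> ennreal c * (\<integral>\<^sup>+g. W g \<partial>Q)"
  proof (intro mult_left_mono nn_integral_mono)
    fix g assume "g \<in> space Q"
    with bound \<open>0 < c\<close> have "ennreal c * ennreal (\<bar>f g\<bar> / c) \<le> ennreal c * W g"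
      by (simp add: ennreal_mult[symmetric])
    then show "ennreal (\<bar>f g\<bar> / c) \<le> W g"
      using \<open>0 < c\<close> by (simp add: ennreal_mult_le_mult_iff)
  qed simp
  finally show ?thesis .
qed

lemma (in finite_measure) integral_power2_eq_SUP_truncated:
  fixes w :: "'a \<Rightarrow> real"
  assumes [measurable]: "w \<in> borel_measurable M" and w: "\<And>x. 0 \<le> w x"
  shows "(\<integral>x. (w x)\<^sup>2 \<partial>M) = enn2real (SUP n::nat. ennreal (\<integral>x. (min (w x) n)\<^sup>2 \<partial>M))"
proof -
  have "(SUP n::nat. ennreal ((min (w x) n)\<^sup>2)) = ennreal ((w x)\<^sup>2)" for x
  proof (rule antisym)
    show "(SUP n::nat. ennreal ((min (w x) n)\<^sup>2)) \<le> ennreal ((w x)\<^sup>2)"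
      using w by (intro SUP_least ennreal_leI power_mono) auto
    obtain n :: nat where "w x \<le> n" using real_arch_simple by blast
    then have "ennreal ((w x)\<^sup>2) = ennreal ((min (w x) n)\<^sup>2)" by simp
    also have "\<dots> \<le> (SUP n::nat. ennreal ((min (w x) n)\<^sup>2))" by (rule SUP_upper) simp
    finally show "ennreal ((w x)\<^sup>2) \<le> (SUP n::nat. ennreal ((min (w x) n)\<^sup>2))" .
  qed
  then have "(\<integral>\<^sup>+x. ennreal ((w x)\<^sup>2) \<partial>M) = (\<integral>\<^sup>+x. (SUP n::nat. ennreal ((min (w x) n)\<^sup>2)) \<partial>M)"
    by simp
  also have "\<dots> = (SUP n::nat. \<integral>\<^sup>+x. ennreal ((min (w x) n)\<^sup>2) \<partial>M)"
    using w by (intro nn_integral_monotone_convergence_SUP)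
      (auto simp: incseq_def le_fun_def intro!: ennreal_leI power_mono)
  also have "\<dots> = (SUP n::nat. ennreal (\<integral>x. (min (w x) n)\<^sup>2 \<partial>M))"
  proof (intro SUP_cong refl nn_integral_eq_integral)
    fix n :: nat
    have "(min (w x) n)\<^sup>2 \<le> (real n)\<^sup>2" for x
      using w by (intro power_mono) auto
    then show "integrable M (\<lambda>x. (min (w x) n)\<^sup>2)"
      by (intro integrable_const_bound[where B = "(real n)\<^sup>2"] AE_I2) auto
  qed simp
  finally show ?thesis
    by (simp add: integral_eq_nn_integral)
qed

lemma (in sigma_finite_measure) borel_measurable_integral_fst:
  fixes f :: "'a \<Rightarrow> 'b \<Rightarrow> 'c::{banach, second_countable_topology}"
  assumes "(\<lambda>(x, y). f x y) \<in> borel_measurable (M \<Otimes>\<^sub>M N)"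
  shows "(\<lambda>y. \<integral>x. f x y \<partial>M) \<in> borel_measurable N"
  using measurable_pair_swap_iff[of "\<lambda>(y, x). f x y" N M borel] assms
  by (intro borel_measurable_lebesgue_integral) simp

section \<open>Averaged estimators\<close>

lemma abs_average_MSE_diff_le_wasserstein1:
  fixes F :: "'x \<Rightarrow> 'g \<Rightarrow> real^'p" and T :: "'x \<Rightarrow> real^'p"
  assumes M: "prob_space M" and Q: "prob_space Q"
    and F [measurable]: "(\<lambda>(x, g). F x g) \<in> borel_measurable (M \<Otimes>\<^sub>M Q)"
    and T [measurable]: "T \<in> borel_measurable M"
    and bounded: "\<And>x g. x \<in> space M \<Longrightarrow> norm (F x g) \<le> b" "\<And>x. x \<in> space M \<Longrightarrow> norm (T x) \<le> b"
  shows "ennreal \<bar>(\<integral>g. MSE M (\<lambda>x. F x g) t \<partial>Q) - MSE M T t\<bar>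
    \<le> ennreal (2 * (b + norm t)) * (\<integral>\<^sup>+g. wasserstein1 (law M (\<lambda>x. F x g)) (law M T) \<partial>Q)"
proof -
  interpret M: prob_space M by (rule M)
  interpret Q: prob_space Q by (rule Q)
  obtain x where "x \<in> space M" using M.not_empty by blast
  then have "0 \<le> b" using bounded(2) norm_ge_zero order_trans by blast
  define D where "D g = MSE M (\<lambda>x. F x g) t - MSE M T t" for g
  have D_bound: "ennreal \<bar>D g\<bar> \<le> ennreal (2 * (b + norm t)) * wasserstein1 (law M (\<lambda>x. F x g)) (law M T)"
    if "g \<in> space Q" for g
    unfolding D_def using that bounded measurable_Pair1[OF F]
    by (intro MSE_diff_le_wasserstein1[OF M]) auto
  have MSE_range: "0 \<le> MSE M X t \<and> MSE M X t \<le> (b + norm t)\<^sup>2"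
    if "X \<in> borel_measurable M" "\<And>x. x \<in> space M \<Longrightarrow> norm (X x) \<le> b" for X
    unfolding MSE_def
  proof (intro M.integral_nonneg_le_const)
    show "0 \<le> (norm (X x - t))\<^sup>2 \<and> (norm (X x - t))\<^sup>2 \<le> (b + norm t)\<^sup>2" if "x \<in> space M" for x
      using norm_triangle_ineq4[of "X x" t] that \<open>\<And>x. x \<in> space M \<Longrightarrow> norm (X x) \<le> b\<close>
      by (intro conjI zero_le_power2 power_mono) force+
  qed (use that in measurable)
  have "integrable Q (\<lambda>g. MSE M (\<lambda>x. F x g) t)"
  proof (rule Q.integrable_const_bound[where B = "(b + norm t)\<^sup>2"])
    show "AE g in Q. norm (MSE M (\<lambda>x. F x g) t) \<le> (b + norm t)\<^sup>2"
      using MSE_range measurable_Pair1[OF F] bounded(1) by (intro AE_I2) auto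
    show "(\<lambda>g. MSE M (\<lambda>x. F x g) t) \<in> borel_measurable Q"
      unfolding MSE_def by (intro M.borel_measurable_integral_fst) measurable
  qed
  then have "integrable Q D" and "(\<integral>g. D g \<partial>Q) = (\<integral>g. MSE M (\<lambda>x. F x g) t \<partial>Q) - MSE M T t"
    unfolding D_def by (simp_all add: Q.prob_space)
  then have "ennreal \<bar>(\<integral>g. MSE M (\<lambda>x. F x g) t \<partial>Q) - MSE M T t\<bar> = ennreal \<bar>\<integral>g. D g \<partial>Q\<bar>"
    by simp
  also have "\<dots> \<le> ennreal (\<integral>g. \<bar>D g\<bar> \<partial>Q)"
    by (intro ennreal_leI integral_abs_bound)
  also have "\<dots> \<le> ennreal (2 * (b + norm t)) * (\<integral>\<^sup>+g. wasserstein1 (law M (\<lambda>x. F x g)) (law M T) \<partial>Q)"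
    using \<open>integrable Q D\<close> \<open>0 \<le> b\<close> D_bound by (intro integral_abs_le_cmult_nn_integral) auto
  finally show ?thesis .
qed

lemma AE_truncated_second_moment_eq_if_nn_integral_wasserstein1_eq_0:
  fixes F :: "'x \<Rightarrow> 'g \<Rightarrow> real^'p" and T :: "'x \<Rightarrow> real^'p" and n :: nat
  assumes M: "prob_space M" and Q: "prob_space Q"
    and F [measurable]: "(\<lambda>(x, g). F x g) \<in> borel_measurable (M \<Otimes>\<^sub>M Q)"
    and T [measurable]: "T \<in> borel_measurable M"
    and W0: "(\<integral>\<^sup>+g. wasserstein1 (law M (\<lambda>x. F x g)) (law M T) \<partial>Q) = 0"
  shows "AE g in Q. (\<integral>x. (min (norm (F x g - t)) n)\<^sup>2 \<partial>M) = (\<integral>x. (min (norm (T x - t)) n)\<^sup>2 \<partial>M)"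
proof -
  interpret M: prob_space M by (rule M)
  interpret Q: prob_space Q by (rule Q)
  define h where "h v = (min (norm (v - t)) (real n))\<^sup>2" for v :: "real^'p"
  \<comment> \<open>The Wasserstein distance need not be measurable in \<open>g\<close>, so its vanishing integral is
    transferred to the measurable, \<open>2 n\<close>-dominated differences \<open>D\<close>.\<close>
  define D where "D g = (\<integral>x. h (F x g) \<partial>M) - (\<integral>x. h (T x) \<partial>M)" for g
  have integral_h: "0 \<le> (\<integral>x. h (X x) \<partial>M) \<and> (\<integral>x. h (X x) \<partial>M) \<le> (real n)\<^sup>2"
    if "X \<in> borel_measurable M" for X
    using that unfolding h_def by (intro M.integral_nonneg_le_const) (auto intro: power_mono)
  have "\<bar>D g\<bar> \<le> (real n)\<^sup>2" if "g \<in> space Q" for g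
  proof -
    have "(\<lambda>x. F x g) \<in> borel_measurable M"
      using measurable_Pair1[OF F that] by simp
    then show ?thesis
      using integral_h[of "\<lambda>x. F x g"] integral_h[OF T] unfolding D_def by (simp add: abs_le_iff)
  qed
  then have "integrable Q D"
  proof (intro Q.integrable_const_bound[where B = "(real n)\<^sup>2"] AE_I2)
    show "D \<in> borel_measurable Q"
      unfolding D_def h_def by (intro borel_measurable_diff M.borel_measurable_integral_fst) measurable
  qed simp
  moreover have "ennreal \<bar>D g\<bar> \<le> ennreal (2 * real n) * wasserstein1 (law M (\<lambda>x. F x g)) (law M T)"
    if "g \<in> space Q" for g
    unfolding D_def h_def using measurable_Pair1[OF F that]
    by (intro truncated_second_moment_diff_le_wasserstein1[OF M]) auto
  ultimately have "ennreal (\<integral>g. \<bar>D g\<bar> \<partial>Q)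
      \<le> ennreal (2 * real n) * (\<integral>\<^sup>+g. wasserstein1 (law M (\<lambda>x. F x g)) (law M T) \<partial>Q)"
    by (intro integral_abs_le_cmult_nn_integral) auto
  then have "(\<integral>g. \<bar>D g\<bar> \<partial>Q) = 0"
    using W0 by (simp add: antisym integral_nonneg_AE)
  then have "AE g in Q. D g = 0"
    using \<open>integrable Q D\<close> by (subst (asm) integral_nonneg_eq_0_iff_AE) auto
  then show ?thesis
    by (simp add: D_def h_def)
qed

lemma integral_MSE_eq_if_nn_integral_wasserstein1_eq_0:
  fixes F :: "'x \<Rightarrow> 'g \<Rightarrow> real^'p" and T :: "'x \<Rightarrow> real^'p"
  assumes M: "prob_space M" and Q: "prob_space Q"
    and F [measurable]: "(\<lambda>(x, g). F x g) \<in> borel_measurable (M \<Otimes>\<^sub>M Q)"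
    and T [measurable]: "T \<in> borel_measurable M"
    and W0: "(\<integral>\<^sup>+g. wasserstein1 (law M (\<lambda>x. F x g)) (law M T) \<partial>Q) = 0"
  shows "(\<integral>g. MSE M (\<lambda>x. F x g) t \<partial>Q) = MSE M T t"
proof -
  interpret M: prob_space M by (rule M)
  have "AE g in Q. \<forall>n::nat.
      (\<integral>x. (min (norm (F x g - t)) n)\<^sup>2 \<partial>M) = (\<integral>x. (min (norm (T x - t)) n)\<^sup>2 \<partial>M)"
    using AE_truncated_second_moment_eq_if_nn_integral_wasserstein1_eq_0[OF assms]
    by (simp add: AE_all_countable)
  then have "AE g in Q. MSE M (\<lambda>x. F x g) t = MSE M T t"
  proof (rule AE_mp[OF _ AE_I2], intro impI)
    fix g assume "g \<in> space Q"
    then have [measurable]: "(\<lambda>x. F x g) \<in> borel_measurable M"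
      using measurable_Pair1[OF F] by simp
    assume truncations_eq:
      "\<forall>n::nat. (\<integral>x. (min (norm (F x g - t)) n)\<^sup>2 \<partial>M) = (\<integral>x. (min (norm (T x - t)) n)\<^sup>2 \<partial>M)"
    show "MSE M (\<lambda>x. F x g) t = MSE M T t"
      unfolding MSE_def
      using M.integral_power2_eq_SUP_truncated[of "\<lambda>x. norm (F x g - t)"]
        M.integral_power2_eq_SUP_truncated[of "\<lambda>x. norm (T x - t)"] truncations_eq
      by simp
  qed
  moreover have "(\<lambda>g. MSE M (\<lambda>x. F x g) t) \<in> borel_measurable Q"
    unfolding MSE_def by (intro M.borel_measurable_integral_fst) measurable
  ultimately have "(\<integral>g. MSE M (\<lambda>x. F x g) t \<partial>Q) = (\<integral>g. MSE M T t \<partial>Q)"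
    by (intro integral_cong_AE) simp_all
  then show ?thesis
    by (simp add: prob_space.prob_space[OF Q])
qed

lemma norm_le_add_norm_Bias:
  fixes T :: "'x \<Rightarrow> real^'p"
  assumes M: "prob_space M" and "T \<in> borel_measurable M" and bounded: "\<And>x. x \<in> space M \<Longrightarrow> norm (T x) \<le> b"
  shows "norm t \<le> b + norm (Bias M T t)"
proof -
  interpret prob_space M by (rule M)
  have "integrable M (\<lambda>x. norm (T x))"
    using assms by (intro integrable_const_bound[where B = b] AE_I2) auto
  then have "norm (\<integral>x. T x \<partial>M) \<le> b"
    using integral_norm_bound[of M T] integral_le_const[of "\<lambda>x. norm (T x)" b] bounded
    by (meson AE_I2 order_trans)
  then show ?thesis
    unfolding Bias_def using norm_triangle_ineq3[of t "\<integral>x. T x \<partial>M"]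
    by (simp add: norm_minus_commute)
qed

lemma abs_MSE_average_diff_add_trace_cov_le:
  fixes F :: "'x \<Rightarrow> 'g \<Rightarrow> real^'p" and T :: "'x \<Rightarrow> real^'p"
  assumes M: "prob_space M" and Q: "prob_space Q"
    and F: "(\<lambda>(x, g). F x g) \<in> borel_measurable (M \<Otimes>\<^sub>M Q)"
    and F2: "integrable (M \<Otimes>\<^sub>M Q) (\<lambda>(x, g). (norm (F x g))\<^sup>2)"
    and T: "T \<in> borel_measurable M"
    and F_le: "\<And>x g. x \<in> space M \<Longrightarrow> ennreal (norm (F x g)) \<le> sup_norm (space M) T"
  defines "EW \<equiv> \<integral>\<^sup>+g. wasserstein1 (law M (\<lambda>x. F x g)) (law M T) \<partial>Q"
  shows "ennreal \<bar>MSE M (\<lambda>x. \<integral>g. F x g \<partial>Q) t - MSE M T t + (\<integral>x. mat_trace (cov_matrix Q (F x)) \<partial>M)\<bar>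
    \<le> EW * (EW + 2 * ennreal (norm (Bias M T t)) + 4 * sup_norm (space M) T)"
proof -
  have LHS_eq: "MSE M (\<lambda>x. \<integral>g. F x g \<partial>Q) t - MSE M T t + (\<integral>x. mat_trace (cov_matrix Q (F x)) \<partial>M)
      = (\<integral>g. MSE M (\<lambda>x. F x g) t \<partial>Q) - MSE M T t"
    using MSE_average_add_expected_trace_cov[OF M Q F F2, of t] by simp
  show ?thesis
  proof (cases "sup_norm (space M) T" rule: ennreal_cases)
    case (real b)
    have T_le: "norm (T x) \<le> b" if "x \<in> space M" for x
      using SUP_upper[OF that, of "\<lambda>x. ennreal (norm (T x))"] real unfolding sup_norm_def by simp
    have F_le': "norm (F x g) \<le> b" if "x \<in> space M" for x g
      using F_le[OF that] real by simp
    have "norm t \<le> b + norm (Bias M T t)"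
      using T_le by (rule norm_le_add_norm_Bias[OF M T])
    then have "ennreal (2 * (b + norm t)) \<le> ennreal (2 * norm (Bias M T t) + 4 * b)"
      by (intro ennreal_leI) (simp add: algebra_simps)
    also have "\<dots> = 2 * ennreal (norm (Bias M T t)) + 4 * ennreal b"
      using \<open>0 \<le> b\<close> by (simp add: ennreal_plus ennreal_mult)
    finally have constant_le: "ennreal (2 * (b + norm t)) \<le> 2 * ennreal (norm (Bias M T t)) + 4 * ennreal b" .
    have "ennreal \<bar>(\<integral>g. MSE M (\<lambda>x. F x g) t \<partial>Q) - MSE M T t\<bar> \<le> ennreal (2 * (b + norm t)) * EW"
      unfolding EW_def by (rule abs_average_MSE_diff_le_wasserstein1[OF M Q F T F_le' T_le])
    also have "\<dots> \<le> (2 * ennreal (norm (Bias M T t)) + 4 * ennreal b) * EW"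
      by (rule mult_right_mono[OF constant_le]) simp
    also have "\<dots> \<le> EW * (EW + 2 * ennreal (norm (Bias M T t)) + 4 * ennreal b)"
      by (simp add: mult.commute add.assoc mult_left_mono)
    finally show ?thesis
      unfolding LHS_eq real .
  next
    case top
    show ?thesis
    proof (cases "EW = 0")
      case True
      then have "(\<integral>g. MSE M (\<lambda>x. F x g) t \<partial>Q) = MSE M T t"
        unfolding EW_def by (rule integral_MSE_eq_if_nn_integral_wasserstein1_eq_0[OF M Q F T])
      with LHS_eq show ?thesis by simp
    qed (simp add: top ennreal_mult_top)
  qed
qed

theorem proposition6p3:
  fixes M :: "'x measure" and Q :: "'g::{topological_group_add, t2_space} measure"
    and act :: "'g \<Rightarrow> 'x \<Rightarrow> 'x" and \<theta> :: "'x \<Rightarrow> real^'p" and \<theta>0 :: "real^'p"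
  assumes "prob_space M"
    and "compact (UNIV :: 'g set)"
    and "haar_prob Q"
    and "group_action act (space M)"
    and "(\<lambda>(x, g). \<theta> (act g x)) \<in> borel_measurable (M \<Otimes>\<^sub>M Q)"
    and "integrable (M \<Otimes>\<^sub>M Q) (\<lambda>(x, g). (norm (\<theta> (act g x)))^2)"
  defines "\<theta>G \<equiv> (\<lambda>x. \<integral>g. \<theta> (act g x) \<partial>Q)"
    and "EW \<equiv> (\<integral>\<^sup>+ g. wasserstein1 (law M (\<lambda>x. \<theta> (act g x))) (law M \<theta>) \<partial>Q)"
  shows "ennreal \<bar>MSE M \<theta>G \<theta>0 - MSE M \<theta> \<theta>0
            + (\<integral>x. mat_trace (cov_matrix Q (\<lambda>g. \<theta> (act g x))) \<partial>M)\<bar>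
         \<le> EW * (EW + 2 * ennreal (norm (Bias M \<theta> \<theta>0)) + 4 * sup_norm (space M) \<theta>)"
proof -
  have Q: "prob_space Q" and "sets Q = sets borel"
    using assms(3) unfolding haar_prob_def by auto
  then have "space Q = UNIV"
    using sets_eq_imp_space_eq by fastforce
  have act_closed: "\<And>g x. x \<in> space M \<Longrightarrow> act g x \<in> space M"
    and act_0: "\<And>x. x \<in> space M \<Longrightarrow> act 0 x = x"
    using assms(4) unfolding group_action_def by auto
  have "(\<lambda>x. \<theta> (act 0 x)) \<in> borel_measurable M"
    using measurable_Pair1[OF assms(5), of 0] \<open>space Q = UNIV\<close> by simp
  then have "\<theta> \<in> borel_measurable M"
    using act_0 by (simp cong: measurable_cong)
  moreover have "ennreal (norm (\<theta> (act g x))) \<le> sup_norm (space M) \<theta>" if "x \<in> space M" for x g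
    unfolding sup_norm_def using act_closed[OF that] by (rule SUP_upper)
  ultimately show ?thesis
    unfolding \<theta>G_def EW_def
    using abs_MSE_average_diff_add_trace_cov_le[OF assms(1) Q, of "\<lambda>x g. \<theta> (act g x)"] assms(5,6)
    by simp
qed

end
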